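(* Let $\pi(\cdot\,|\,\mathbf{x})$ be a smooth positive probability density on $\Theta=\mathbb{R}^d$ with $\log\pi$ smooth. Let $f_0,\dots,f_K:\Theta\to\mathbb{R}$ be smooth functions and let $A^0,\dots,A^K\in\mathbb{R}^{d\times d}$ be symmetric matrices (not necessarily positive) such that $A(\theta)=\sum_{k=0}^K A^kf_k(\theta)$ is a symmetric positive definite matrix for every $\theta\in\Theta$, with $\theta\mapsto A(\theta)^{1/2}$ smooth. Let $\eta_0,\dots,\eta_K>0$. Consider the extended adaptive Langevin dynamics on $(\theta,p,\xi_0,\dots,\xi_K)\in\Theta\times\mathbb{R}^d\times(\mathbb{R}^{d\times d})^{K+1}$: $$\begin{aligned}d\theta_t&=p_t\,dt,\\ dp_t&=\nabla_\theta\log\pi(\theta_t|\mathbf{x})\,dt-\xi_t(\theta_t)p_t\,dt+\sqrt{2}A(\theta_t)^{1/2}dW_t,\\ d[\xi_{k,t}]_{i,j}&=\frac{f_k(\theta_t)}{\eta_k}\big(p_{i,t}p_{j,t}-\delta_{i,j}\big)\,dt,\qquad 1\le i,j\le d,\ 0\le k\le K,\end{aligned}$$ where $\xi_t(\theta)=\sum_{k=0}^K\xi_{k,t}f_k(\theta)$ and $W$ is a standard $d$-dimensional Brownian motion. Then the probability measure $$\nu_K(d\theta\,dp\,d\xi_0\cdots d\xi_K)=\pi(\theta|\mathbf{x})\,d\theta\;\tau(dp)\;\prod_{k=0}^K\prod_{i,j=1}^d\sqrt{\frac{\eta_k}{2\pi}}\exp\Big(-\frac{\eta_k}{2}\big([\xi_k]_{i,j}-[A^k]_{i,j}\big)^2\Big)\,d[\xi_k]_{i,j},$$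 with $\tau(dp)=(2\pi)^{-d/2}e^{-|p|^2/2}dp$, is invariant for this dynamics: for every smooth compactly supported function $\varphi$, $\int\mathcal{L}\varphi\,d\nu_K=0$, where $\mathcal{L}$ is the generator of the dynamics. In particular the marginal of $\nu_K$ in $\theta$ is $\pi(\cdot|\mathbf{x})$.
   Context: $[\xi_k]_{i,j}$ denotes the $(i,j)$ entry of $\xi_k\in\mathbb{R}^{d\times d}$; all $d^2$ entries of each $\xi_k$ are treated as independent variables. In the paper's application, $A(\theta)=\Gamma+\frac{\epsilon(n)\Delta t}{2}\Sigma_{\mathbf{x}}(\theta)$ with $\Gamma$ a friction matrix and $\Sigma_{\mathbf{x}}$ the covariance of a stochastic gradient estimator, and the hypothesis is that this matrix decomposes on the basis $f_0,\dots,f_K$. The generator is $\mathcal{L}=p^T\nabla_\theta+\nabla_\theta(\log\pi)^T\nabla_p-p^T\xi(\theta)^T\nabla_p+A(\theta):\nabla_p^2+\sum_{k=0}^K\frac{f_k(\theta)}{\eta_k}\sum_{i,j}(p_ip_j-\delta_{i,j})\partial_{[\xi_k]_{i,j}}$ (with $\xi(\theta)p$ the drift term in $p$), where $M^1:M^2=\sum_{i,j}M^1_{i,j}M^2_{i,j}$. *)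

theory Defs
  imports "HOL-Probability.Probability"
begin

definition pdiff :: "'a::real_normed_vector \<Rightarrow> ('a \<Rightarrow> 'b::real_normed_vector) \<Rightarrow> 'a \<Rightarrow> 'b" where
  "pdiff v f x = frechet_derivative f (at x) v"

fun iter_pdiff :: "'a::real_normed_vector list \<Rightarrow> ('a \<Rightarrow> 'b::real_normed_vector) \<Rightarrow> 'a \<Rightarrow> 'b" where
  "iter_pdiff [] f = f"
| "iter_pdiff (v # vs) f = pdiff v (iter_pdiff vs f)"

definition smooth :: "('a::real_normed_vector \<Rightarrow> 'b::real_normed_vector) \<Rightarrow> bool" where
  "smooth f \<longleftrightarrow> (\<forall>vs x. iter_pdiff vs f differentiable (at x))"

definition symmetric_mat :: "real^'n^'n \<Rightarrow> bool" where
  "symmetric_mat M \<longleftrightarrow> transpose M = M"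

definition pos_def_mat :: "real^'n^'n \<Rightarrow> bool" where
  "pos_def_mat M \<longleftrightarrow> symmetric_mat M \<and> (\<forall>v. v \<noteq> 0 \<longrightarrow> 0 < v \<bullet> (M *v v))"

definition pos_semidef_mat :: "real^'n^'n \<Rightarrow> bool" where
  "pos_semidef_mat M \<longleftrightarrow> symmetric_mat M \<and> (\<forall>v. 0 \<le> v \<bullet> (M *v v))"

text \<open>State space: (theta, p, xi) with xi $ k $ i $ j = [xi_k]_{i,j}; the index type 'k has K+1 elements.\<close>
type_synonym ('n, 'k) state = "(real^'n) \<times> (real^'n) \<times> (real^'n^'n^'k)"

definition dir_theta :: "'n::finite \<Rightarrow> ('n, 'k::finite) state" where
  "dir_theta i = (axis i 1, 0, 0)"
definition dir_p :: "'n::finite \<Rightarrow> ('n, 'k::finite) state" where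
  "dir_p i = (0, axis i 1, 0)"
definition dir_xi :: "'k::finite \<Rightarrow> 'n::finite \<Rightarrow> 'n \<Rightarrow> ('n, 'k) state" where
  "dir_xi k i j = (0, 0, axis k (axis i (axis j 1)))"

definition Amat :: "('k::finite \<Rightarrow> real^'n \<Rightarrow> real) \<Rightarrow> real^'n^'n^'k \<Rightarrow> real^'n \<Rightarrow> real^'n::finite^'n" where
  "Amat f A0 \<theta> = (\<Sum>k\<in>UNIV. f k \<theta> *\<^sub>R A0 $ k)"

definition xi_of :: "('k::finite \<Rightarrow> real^'n \<Rightarrow> real) \<Rightarrow> real^'n^'n^'k \<Rightarrow> real^'n \<Rightarrow> real^'n::finite^'n" where
  "xi_of f \<xi> \<theta> = (\<Sum>k\<in>UNIV. f k \<theta> *\<^sub>R \<xi> $ k)"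

definition generator ::
  "(real^'n \<Rightarrow> real) \<Rightarrow> ('k \<Rightarrow> real^'n \<Rightarrow> real) \<Rightarrow> real^'n^'n^'k \<Rightarrow> ('k \<Rightarrow> real)
    \<Rightarrow> (('n::finite, 'k::finite) state \<Rightarrow> real) \<Rightarrow> ('n, 'k) state \<Rightarrow> real" where
  "generator \<pi> f A0 \<eta> \<phi> z = (case z of (\<theta>, p, \<xi>) \<Rightarrow>
      (\<Sum>i\<in>UNIV. p $ i * pdiff (dir_theta i) \<phi> z)
    + (\<Sum>i\<in>UNIV. pdiff (axis i 1) (\<lambda>t. ln (\<pi> t)) \<theta> * pdiff (dir_p i) \<phi> z)
    - (\<Sum>i\<in>UNIV. (xi_of f \<xi> \<theta> *v p) $ i * pdiff (dir_p i) \<phi> z)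
    + (\<Sum>i\<in>UNIV. \<Sum>j\<in>UNIV. Amat f A0 \<theta> $ i $ j * iter_pdiff [dir_p i, dir_p j] \<phi> z)
    + (\<Sum>k\<in>UNIV. f k \<theta> / \<eta> k *
         (\<Sum>i\<in>UNIV. \<Sum>j\<in>UNIV. (p $ i * p $ j - (if i = j then 1 else 0)) * pdiff (dir_xi k i j) \<phi> z)))"

definition nuK_density ::
  "(real^'n \<Rightarrow> real) \<Rightarrow> real^'n^'n^'k \<Rightarrow> ('k \<Rightarrow> real) \<Rightarrow> ('n::finite, 'k::finite) state \<Rightarrow> real" where
  "nuK_density \<pi> A0 \<eta> z = (case z of (\<theta>, p, \<xi>) \<Rightarrow>
      \<pi> \<theta> * ((2 * pi) powr (- real CARD('n) / 2) * exp (- (norm p)\<^sup>2 / 2))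
      * (\<Prod>k\<in>UNIV. \<Prod>i\<in>UNIV. \<Prod>j\<in>UNIV.
           sqrt (\<eta> k / (2 * pi)) * exp (- (\<eta> k / 2) * (\<xi> $ k $ i $ j - A0 $ k $ i $ j)\<^sup>2)))"

definition nuK :: "(real^'n \<Rightarrow> real) \<Rightarrow> real^'n^'n^'k \<Rightarrow> ('k \<Rightarrow> real) \<Rightarrow> ('n::finite, 'k::finite) state measure" where
  "nuK \<pi> A0 \<eta> = density lborel (\<lambda>z. ennreal (nuK_density \<pi> A0 \<eta> z))"

end

theory Submission
  imports Defs
begin

(*
  Write rho for the Lebesgue density of nu_K: the posterior pi(theta) times the standard Gaussian in p
  times independent Gaussians N(A^k_ij, 1/eta_k) in the thermostat variables. Its logarithmic
  derivatives are explicit: d/dtheta_i log pi, -p_i and -eta_k ([xi_k]_ij - [A^k]_ij). For a compactly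
  supported test function phi every first-order term of rho * L phi is w * (d_v phi) for a C^1 weight w,
  and the second-order term becomes one after a first integration by parts in p; integrating by parts
  once more gives  int rho * L phi = int phi * L^* rho.  Divided by rho, L^* rho is a polynomial in p
  which vanishes identically: the transport terms p . grad log pi cancel, and the friction and
  fluctuation contributions  p^T xi(theta) p - tr xi(theta) - p^T A(theta) p + tr A(theta)  are exactly
  cancelled by the thermostat drift  sum_k f_k(theta) (p p^T - I) : (xi_k - A^k),  because xi(theta)
  and A(theta) are decomposed on the same functions f_k. The statements about nu_K itself (total mass
  one, theta-marginal pi) follow from Tonelli and the Gaussian integrals being one.
*)

section \<open>Directional derivatives\<close>

lemma has_derivative_vec_nth [derivative_intros]:
  "(f has_derivative f') F \<Longrightarrow> ((\<lambda>x. f x $ i) has_derivative (\<lambda>h. f' h $ i)) F"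
  by (rule bounded_linear.has_derivative[OF bounded_linear_vec_nth])

lemma pdiff_eq: "(f has_derivative f') (at x) \<Longrightarrow> pdiff v f x = f' v"
  by (simp add: pdiff_def frechet_derivative_at[symmetric])

lemma pdiff_mult:
  assumes "f differentiable (at x)" "g differentiable (at x)"
  shows "pdiff v (\<lambda>x. f x * g x :: real) x = pdiff v f x * g x + f x * pdiff v g x"
proof -
  have "((\<lambda>x. f x * g x) has_derivative
      (\<lambda>h. f x * frechet_derivative g (at x) h + frechet_derivative f (at x) h * g x)) (at x)"
    using assms by (intro has_derivative_mult) (auto simp: frechet_derivative_works[symmetric])
  from pdiff_eq[OF this, of v] show ?thesis by (simp add: pdiff_def)
qed

lemma pdiff_diff:
  assumes "f differentiable (at x)" "g differentiable (at x)"
  shows "pdiff v (\<lambda>x. f x - g x :: 'b::real_normed_vector) x = pdiff v f x - pdiff v g x"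
proof -
  have "((\<lambda>x. f x - g x) has_derivative (\<lambda>h. frechet_derivative f (at x) h - frechet_derivative g (at x) h)) (at x)"
    using assms by (intro has_derivative_diff) (auto simp: frechet_derivative_works[symmetric])
  from pdiff_eq[OF this, of v] show ?thesis by (simp add: pdiff_def)
qed

lemma pdiff_linear: "bounded_linear L \<Longrightarrow> pdiff v L x = L v"
  using bounded_linear_imp_has_derivative pdiff_eq by blast

lemma pdiff_compose_linear:
  assumes "bounded_linear P" "G differentiable (at (P x))"
  shows "pdiff v (\<lambda>x. G (P x)) x = pdiff (P v) G (P x)"
proof -
  have "((\<lambda>x. G (P x)) has_derivative (\<lambda>h. frechet_derivative G (at (P x)) (P h))) (at x)"
    using has_derivative_compose[OF bounded_linear_imp_has_derivative[OF assms(1)]] assms(2)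
      frechet_derivative_works by blast
  from pdiff_eq[OF this, of v] show ?thesis by (simp add: pdiff_def)
qed

lemma pdiff_zero_direction: "G differentiable (at x) \<Longrightarrow> pdiff 0 G x = 0"
  by (metis frechet_derivative_works has_derivative_linear linear_0 pdiff_def)

lemma pdiff_compose_linear_eq_0:
  assumes "bounded_linear P" "\<And>y. G differentiable (at y)" "P v = 0"
  shows "pdiff v (\<lambda>x. G (P x)) x = 0"
  using assms by (simp add: pdiff_compose_linear pdiff_zero_direction)

lemma differentiable_compose_linear:
  "bounded_linear P \<Longrightarrow> (\<And>y. G differentiable (at y)) \<Longrightarrow> (\<lambda>x. G (P x)) differentiable (at x)"
  using differentiable_compose bounded_linear_imp_differentiable by blast

lemma pdiff_sum:
  assumes "finite I" "\<And>i. i \<in> I \<Longrightarrow> F i differentiable (at x)"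
  shows "pdiff v (\<lambda>x. \<Sum>i\<in>I. F i x) x = (\<Sum>i\<in>I. pdiff v (F i) x)"
proof -
  have "((\<lambda>x. \<Sum>i\<in>I. F i x) has_derivative (\<lambda>h. \<Sum>i\<in>I. frechet_derivative (F i) (at x) h)) (at x)"
    using assms by (intro has_derivative_sum) (auto simp: frechet_derivative_works[symmetric])
  from pdiff_eq[OF this, of v] show ?thesis by (simp add: pdiff_def)
qed

lemma pdiff_eq_0_outside:
  assumes "closed S" "\<And>x. x \<notin> S \<Longrightarrow> h x = 0" "x \<notin> S"
  shows "pdiff v h x = 0"
proof -
  have "(h has_derivative (\<lambda>_. 0)) (at x)"
    by (rule has_derivative_transform_within_open[where f="\<lambda>_. 0" and s="- S"]) (use assms in auto)
  then show ?thesis by (simp add: pdiff_eq)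
qed

lemma continuous_on_UNIV_if_differentiable: "(\<And>x. f differentiable (at x)) \<Longrightarrow> continuous_on UNIV f"
  by (simp add: differentiable_imp_continuous_within continuous_at_imp_continuous_on)

lemma iter_pdiff_append: "iter_pdiff (vs @ ws) f = iter_pdiff vs (iter_pdiff ws f)"
  by (induction vs) simp_all

lemma smooth_pdiff: "smooth g \<Longrightarrow> smooth (pdiff v g)"
  unfolding smooth_def by (metis iter_pdiff.simps iter_pdiff_append)

lemma smooth_differentiable: "smooth g \<Longrightarrow> g differentiable (at x)"
  unfolding smooth_def by (metis iter_pdiff.simps(1))

lemma smooth_continuous_on: "smooth g \<Longrightarrow> continuous_on UNIV g"
  by (simp add: continuous_on_UNIV_if_differentiable smooth_differentiable)

section \<open>Integration by parts against compactly supported functions\<close>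

lemma integrable_if_compact_support:
  fixes f :: "'a::euclidean_space \<Rightarrow> real"
  assumes "continuous_on UNIV f" "compact S" "\<And>x. x \<notin> S \<Longrightarrow> f x = 0"
  shows "integrable lborel f"
proof -
  have "f = (\<lambda>x. indicator S x *\<^sub>R f x)"
    using assms(3) by (auto simp: fun_eq_iff split: split_indicator)
  then show ?thesis
    by (metis borel_integrable_compact assms(1,2) continuous_on_subset top_greatest)
qed

lemma bounded_if_compact_support:
  fixes f :: "'a::euclidean_space \<Rightarrow> real"
  assumes "continuous_on UNIV f" "compact S" "\<And>x. x \<notin> S \<Longrightarrow> f x = 0"
  obtains M where "\<And>x. \<bar>f x\<bar> \<le> M"
proof -
  have "compact (f ` S)"
    by (rule compact_continuous_image[OF continuous_on_subset[OF assms(1)] assms(2)]) auto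
  then obtain B where "\<And>y. y \<in> f ` S \<Longrightarrow> \<bar>y\<bar> \<le> B"
    using compact_imp_bounded bounded_real by metis
  then have "\<bar>f x\<bar> \<le> max B 0" for x
    using assms(3) by (cases "x \<in> S") force+
  then show ?thesis using that by blast
qed

lemma lborel_integral_translate:
  fixes h :: "'a::euclidean_space \<Rightarrow> real"
  assumes "integrable lborel h"
  shows "integrable lborel (\<lambda>x. h (c + x))" "integral\<^sup>L lborel (\<lambda>x. h (c + x)) = integral\<^sup>L lborel h"
proof -
  have [measurable]: "h \<in> borel_measurable borel"
    using assms by auto
  show "integrable lborel (\<lambda>x. h (c + x))"
    using assms by (subst (asm) lborel_distr_plus[symmetric, of c]) (simp add: integrable_distr_eq)
  show "integral\<^sup>L lborel (\<lambda>x. h (c + x)) = integral\<^sup>L lborel h"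
    by (subst (2) lborel_distr_plus[symmetric, of c]) (simp add: integral_distr)
qed

lemma has_real_derivative_along:
  assumes "h differentiable (at (x + s *\<^sub>R v))"
  shows "((\<lambda>s. h (x + s *\<^sub>R v)) has_real_derivative pdiff v h (x + s *\<^sub>R v)) (at s)"
proof -
  let ?D = "frechet_derivative h (at (x + s *\<^sub>R v))"
  have "((\<lambda>s. x + s *\<^sub>R v) has_derivative (\<lambda>t. t *\<^sub>R v)) (at s)"
    by (auto intro!: derivative_eq_intros)
  from has_derivative_compose[OF this] assms
  have "((\<lambda>s. h (x + s *\<^sub>R v)) has_derivative (\<lambda>t. ?D (t *\<^sub>R v))) (at s)"
    using frechet_derivative_works by blast
  moreover have "linear ?D"
    using assms frechet_derivative_works has_derivative_linear by blast
  ultimately show ?thesis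
    by (simp add: has_field_derivative_def linear_scale pdiff_def mult_commute_abs)
qed

lemma difference_quotient_bound:
  assumes "\<And>y. h differentiable (at y)" "\<And>y. \<bar>pdiff v h y\<bar> \<le> M" "0 < t"
  shows "\<bar>(h (x + t *\<^sub>R v) - h x) / t\<bar> \<le> M"
proof -
  obtain s where "h (x + t *\<^sub>R v) - h (x + 0 *\<^sub>R v) = (t - 0) * pdiff v h (x + s *\<^sub>R v)"
    using MVT2[of 0 t "\<lambda>s. h (x + s *\<^sub>R v)" "\<lambda>s. pdiff v h (x + s *\<^sub>R v)"]
      has_real_derivative_along assms(1,3) by blast
  then show ?thesis using assms(2,3) by simp
qed

lemma difference_quotient_tendsto:
  assumes "h differentiable (at x)" "filterlim t (at 0) F"
  shows "((\<lambda>n. (h (x + t n *\<^sub>R v) - h x) / t n) \<longlongrightarrow> pdiff v h x) F"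
proof -
  have "((\<lambda>s. (h (x + (0 + s) *\<^sub>R v) - h (x + 0 *\<^sub>R v)) / s) \<longlongrightarrow> pdiff v h x) (at 0)"
    using has_real_derivative_along[of h x 0 v] assms(1) by (simp add: DERIV_def)
  from filterlim_compose[OF this assms(2)] show ?thesis by simp
qed

lemma compact_support_translates:
  fixes h :: "'a::real_normed_vector \<Rightarrow> real"
  assumes "compact S" "\<And>x. x \<notin> S \<Longrightarrow> h x = 0"
  obtains S' where "compact S'" "\<And>x s. x \<notin> S' \<Longrightarrow> \<bar>s\<bar> \<le> 1 \<Longrightarrow> h (x + s *\<^sub>R v) = 0"
proof
  let ?S' = "(\<lambda>(y, s). y + s *\<^sub>R v) ` (S \<times> {-1..1})"
  show "compact ?S'"
    by (rule compact_continuous_image)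
      (auto intro!: continuous_intros compact_Times assms(1) simp: case_prod_unfold)
  show "h (x + s *\<^sub>R v) = 0" if "x \<notin> ?S'" "\<bar>s\<bar> \<le> 1" for x s
  proof (rule ccontr)
    assume "h (x + s *\<^sub>R v) \<noteq> 0"
    then have "(x + s *\<^sub>R v, - s) \<in> S \<times> {-1..1}"
      using assms(2) that(2) by force
    then have "(\<lambda>(y, s). y + s *\<^sub>R v) (x + s *\<^sub>R v, - s) \<in> ?S'"
      by (rule imageI)
    with that(1) show False
      by simp
  qed
qed

lemma integral_pdiff_eq_0:
  fixes h :: "'a::euclidean_space \<Rightarrow> real"
  assumes h: "\<And>x. h differentiable (at x)" and cont: "continuous_on UNIV (pdiff v h)"
    and S: "compact S" and supp: "\<And>x. x \<notin> S \<Longrightarrow> h x = 0"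
  shows "integrable lborel (pdiff v h)" "integral\<^sup>L lborel (pdiff v h) = 0"
proof -
  have supp': "pdiff v h x = 0" if "x \<notin> S" for x
    using pdiff_eq_0_outside[OF compact_imp_closed[OF S] supp that] .
  show int: "integrable lborel (pdiff v h)"
    using integrable_if_compact_support[OF cont S supp'] .
  have inth: "integrable lborel h"
    using integrable_if_compact_support[OF continuous_on_UNIV_if_differentiable[OF h] S supp] .
  obtain M where M: "\<And>x. \<bar>pdiff v h x\<bar> \<le> M"
    using bounded_if_compact_support[OF cont S supp'] by blast
  define t where "t n = 1 / real (Suc n)" for n
  have t: "0 < t n" "t n \<le> 1" for n
    by (auto simp: t_def)
  define F where "F n = (\<lambda>x. (h (x + t n *\<^sub>R v) - h x) / t n)" for n
  obtain S' where "compact S'" and S': "\<And>x s. x \<notin> S' \<Longrightarrow> \<bar>s\<bar> \<le> 1 \<Longrightarrow> h (x + s *\<^sub>R v) = 0"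
    using compact_support_translates[where h=h and v=v, OF S supp] by blast
  have F_outside: "F n x = 0" if "x \<notin> S'" for n x
  proof -
    have "\<bar>t n\<bar> \<le> 1"
      using t[of n] by simp
    then have "h (x + t n *\<^sub>R v) = 0" "h x = 0"
      using S'[OF that, of "t n"] S'[OF that, of 0] by simp_all
    then show ?thesis
      by (simp add: F_def)
  qed
  have "(\<lambda>n. integral\<^sup>L lborel (F n)) \<longlonglongrightarrow> integral\<^sup>L lborel (pdiff v h)"
  proof (rule integral_dominated_convergence[where w="\<lambda>x. indicator S' x * M"])
    have "filterlim t (at 0) sequentially"
    proof (rule filterlim_atI)
      show "t \<longlonglongrightarrow> 0"
        unfolding t_def using LIMSEQ_inverse_real_of_nat by (simp add: inverse_eq_divide)
    qed (use t in \<open>simp add: less_imp_neq[symmetric]\<close>)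
    then show "AE x in lborel. (\<lambda>n. F n x) \<longlonglongrightarrow> pdiff v h x"
      unfolding F_def using difference_quotient_tendsto h by blast
    have "norm (F n x) \<le> indicator S' x * M" for n x
      using difference_quotient_bound[OF h M t(1)[of n], of x] F_outside[of x n]
      by (cases "x \<in> S'") (auto simp: F_def)
    then show "AE x in lborel. norm (F n x) \<le> indicator S' x * M" for n
      by simp
    show "F n \<in> borel_measurable lborel" for n
      using inth unfolding F_def by (simp add: measurable_compose[OF _ borel_measurable_integrable])
    show "pdiff v h \<in> borel_measurable lborel"
      using int by auto
    show "integrable lborel (\<lambda>x. indicator S' x * M)"
      using \<open>compact S'\<close> by (auto intro!: emeasure_compact_finite borel_compact)
  qed
  moreover have "integral\<^sup>L lborel (F n) = 0" for n
    using lborel_integral_translate[OF inth, of "t n *\<^sub>R v"] inth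
    by (simp add: F_def add.commute)
  ultimately show "integral\<^sup>L lborel (pdiff v h) = 0"
    by (simp add: LIMSEQ_const_iff)
qed

definition opposite_integrals :: "'a measure \<Rightarrow> ('a \<Rightarrow> real) \<Rightarrow> ('a \<Rightarrow> real) \<Rightarrow> bool" where
  "opposite_integrals M f g \<longleftrightarrow>
     integrable M f \<and> integrable M g \<and> integral\<^sup>L M f = - integral\<^sup>L M g"

lemma opposite_integrals_add:
  "opposite_integrals M f g \<Longrightarrow> opposite_integrals M f' g' \<Longrightarrow>
     opposite_integrals M (\<lambda>x. f x + f' x) (\<lambda>x. g x + g' x)"
  by (simp add: opposite_integrals_def)

lemma opposite_integrals_sum:
  "finite I \<Longrightarrow> (\<And>i. i \<in> I \<Longrightarrow> opposite_integrals M (f i) (g i)) \<Longrightarrow>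
     opposite_integrals M (\<lambda>x. \<Sum>i\<in>I. f i x) (\<lambda>x. \<Sum>i\<in>I. g i x)"
  by (induction I rule: finite_induct) (auto simp: opposite_integrals_def)

lemma opposite_integrals_trans:
  assumes "opposite_integrals M f g" "opposite_integrals M g' h" "\<And>x. g' x = - g x"
  shows "opposite_integrals M f h"
proof -
  have "g' = (\<lambda>x. - g x)"
    using assms(3) by auto
  with assms(1,2) show ?thesis
    by (simp add: opposite_integrals_def)
qed

lemma opposite_integrals_zero:
  assumes "opposite_integrals M f g" "\<And>x. g x = 0"
  shows "integrable M f" "integral\<^sup>L M f = 0"
proof -
  have "g = (\<lambda>_. 0)"
    using assms(2) by auto
  then show "integrable M f" "integral\<^sup>L M f = 0"
    using assms(1) by (simp_all add: opposite_integrals_def)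
qed

lemma opposite_integrals_pdiff_mult:
  fixes u w :: "'a::euclidean_space \<Rightarrow> real"
  assumes u: "\<And>x. u differentiable (at x)" "continuous_on UNIV (pdiff v u)"
    and w: "\<And>x. w differentiable (at x)" "continuous_on UNIV (pdiff v w)"
    and S: "compact S" "\<And>x. x \<notin> S \<Longrightarrow> u x = 0"
  shows "opposite_integrals lborel (\<lambda>x. w x * pdiff v u x) (\<lambda>x. u x * pdiff v w x)"
proof -
  have u_cont: "continuous_on UNIV u" and w_cont: "continuous_on UNIV w"
    using u w continuous_on_UNIV_if_differentiable by blast+
  have "pdiff v u x = 0" if "x \<notin> S" for x
    using pdiff_eq_0_outside[OF compact_imp_closed[OF S(1)] S(2) that] .
  then have int1: "integrable lborel (\<lambda>x. w x * pdiff v u x)"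
    by (intro integrable_if_compact_support[OF _ S(1)] continuous_intros u w_cont) auto
  have int2: "integrable lborel (\<lambda>x. u x * pdiff v w x)"
    by (intro integrable_if_compact_support[OF _ S(1)] continuous_intros u_cont w) (simp add: S(2))
  have product_rule: "pdiff v (\<lambda>x. u x * w x) = (\<lambda>x. pdiff v u x * w x + u x * pdiff v w x)"
    using pdiff_mult[OF u(1) w(1)] by auto
  have "integral\<^sup>L lborel (pdiff v (\<lambda>x. u x * w x)) = 0"
  proof (rule integral_pdiff_eq_0[OF _ _ S(1)])
    show "continuous_on UNIV (pdiff v (\<lambda>x. u x * w x))"
      unfolding product_rule by (intro continuous_intros u w u_cont w_cont)
  qed (use u w S(2) in auto)
  with int1 int2 show ?thesis
    unfolding opposite_integrals_def product_rule by (simp add: mult.commute)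
qed

lemma opposite_integrals_weighted:
  fixes \<rho> g \<psi> :: "'a::euclidean_space \<Rightarrow> real"
  assumes \<psi>: "smooth \<psi>" "compact S" "\<And>x. x \<notin> S \<Longrightarrow> \<psi> x = 0"
    and \<rho>: "\<And>x. \<rho> differentiable (at x)" "\<And>x. pdiff v \<rho> x = s x * \<rho> x" "continuous_on UNIV s"
    and g: "\<And>x. g differentiable (at x)" "continuous_on UNIV (pdiff v g)"
  shows "opposite_integrals lborel (\<lambda>x. \<rho> x * g x * pdiff v \<psi> x)
           (\<lambda>x. \<psi> x * ((pdiff v g x + g x * s x) * \<rho> x))"
proof -
  have weight_rule: "pdiff v (\<lambda>x. \<rho> x * g x) x = (pdiff v g x + g x * s x) * \<rho> x" for x
    using pdiff_mult[OF \<rho>(1) g(1)] \<rho>(2) by (simp add: algebra_simps)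
  have "opposite_integrals lborel (\<lambda>x. \<rho> x * g x * pdiff v \<psi> x) (\<lambda>x. \<psi> x * pdiff v (\<lambda>x. \<rho> x * g x) x)"
  proof (rule opposite_integrals_pdiff_mult[OF _ _ _ _ \<psi>(2,3)])
    show "continuous_on UNIV (pdiff v (\<lambda>x. \<rho> x * g x))"
      unfolding weight_rule using \<rho> g continuous_on_UNIV_if_differentiable
      by (intro continuous_intros) auto
  qed (use \<psi>(1) \<rho>(1) g(1) in \<open>auto intro: smooth_differentiable smooth_continuous_on smooth_pdiff\<close>)
  then show ?thesis by (simp add: weight_rule)
qed

section \<open>The invariant measure\<close>

definition gauss_exponent ::
  "real^'n^'n^'k \<Rightarrow> ('k \<Rightarrow> real) \<Rightarrow> (real^'n::finite) \<times> (real^'n^'n^'k::finite) \<Rightarrow> real" where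
  "gauss_exponent A0 \<eta> y = - (fst y \<bullet> fst y) / 2
     - (\<Sum>k\<in>UNIV. \<Sum>i\<in>UNIV. \<Sum>j\<in>UNIV. \<eta> k / 2 * (snd y $ k $ i $ j - A0 $ k $ i $ j)\<^sup>2)"

definition gauss_factor ::
  "real^'n^'n^'k \<Rightarrow> ('k \<Rightarrow> real) \<Rightarrow> (real^'n::finite) \<times> (real^'n^'n^'k::finite) \<Rightarrow> real" where
  "gauss_factor A0 \<eta> y = (2 * pi) powr (- real CARD('n) / 2)
      * (\<Prod>k\<in>UNIV. \<Prod>i::'n\<in>UNIV. \<Prod>j::'n\<in>UNIV. sqrt (\<eta> k / (2 * pi))) * exp (gauss_exponent A0 \<eta> y)"

lemma nuK_density_eq: "nuK_density \<pi> A0 \<eta> z = \<pi> (fst z) * gauss_factor A0 \<eta> (snd z)"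
proof -
  obtain \<theta> p \<xi> where z: "z = (\<theta>, p, \<xi>)" by (cases z) auto
  have "(\<Prod>k\<in>UNIV. \<Prod>i\<in>UNIV. \<Prod>j\<in>UNIV.
           sqrt (\<eta> k / (2 * pi)) * exp (- (\<eta> k / 2) * (\<xi> $ k $ i $ j - A0 $ k $ i $ j)\<^sup>2))
     = (\<Prod>k\<in>UNIV. \<Prod>i::'a\<in>UNIV. \<Prod>j::'a\<in>UNIV. sqrt (\<eta> k / (2 * pi)))
       * exp (- (\<Sum>k\<in>UNIV. \<Sum>i\<in>UNIV. \<Sum>j\<in>UNIV. \<eta> k / 2 * (\<xi> $ k $ i $ j - A0 $ k $ i $ j)\<^sup>2))"
    by (simp add: prod.distrib exp_sum sum_negf[symmetric])
  moreover have "exp (- (p \<bullet> p) / 2 - (\<Sum>k\<in>UNIV. \<Sum>i\<in>UNIV. \<Sum>j\<in>UNIV. \<eta> k / 2 * (\<xi> $ k $ i $ j - A0 $ k $ i $ j)\<^sup>2))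
     = exp (- (p \<bullet> p) / 2) * exp (- (\<Sum>k\<in>UNIV. \<Sum>i\<in>UNIV. \<Sum>j\<in>UNIV. \<eta> k / 2 * (\<xi> $ k $ i $ j - A0 $ k $ i $ j)\<^sup>2))"
    by (simp add: exp_add[symmetric])
  ultimately show ?thesis
    unfolding z nuK_density_def gauss_factor_def gauss_exponent_def power2_norm_eq_inner
    by (simp only: prod.case fst_conv snd_conv mult_ac)
qed

lemma gauss_exponent_has_derivative:
  "(gauss_exponent A0 \<eta> has_derivative (\<lambda>d. - (fst y \<bullet> fst d)
     - (\<Sum>k\<in>UNIV. \<Sum>i\<in>UNIV. \<Sum>j\<in>UNIV. \<eta> k * (snd y $ k $ i $ j - A0 $ k $ i $ j) * snd d $ k $ i $ j))) (at y)"
  unfolding gauss_exponent_def[abs_def]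
  apply (rule derivative_eq_intros refl | simp)+
  apply (simp add: fun_eq_iff inner_commute mult_ac)
  done

lemma gauss_factor_has_derivative:
  "(gauss_factor A0 \<eta> has_derivative (\<lambda>d. (- (fst y \<bullet> fst d)
     - (\<Sum>k\<in>UNIV. \<Sum>i\<in>UNIV. \<Sum>j\<in>UNIV. \<eta> k * (snd y $ k $ i $ j - A0 $ k $ i $ j) * snd d $ k $ i $ j))
     * gauss_factor A0 \<eta> y)) (at y)"
  unfolding gauss_factor_def[abs_def]
  by (rule has_derivative_mult_right[OF DERIV_compose_FDERIV[OF DERIV_exp gauss_exponent_has_derivative],
        THEN has_derivative_eq_rhs]) (simp add: fun_eq_iff)

lemma nn_integral_normal_density: "0 < \<sigma> \<Longrightarrow> (\<integral>\<^sup>+x. ennreal (normal_density \<mu> \<sigma> x) \<partial>lborel) = 1"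
  using prob_space.emeasure_space_1[OF prob_space_normal_density] by (simp add: emeasure_density)

lemma nn_integral_prod_normal_density:
  fixes \<mu> :: "'a::euclidean_space" and \<sigma> :: "'a \<Rightarrow> real"
  assumes "\<And>b. b \<in> Basis \<Longrightarrow> 0 < \<sigma> b"
  shows "(\<integral>\<^sup>+x. ennreal (\<Prod>b\<in>Basis. normal_density (\<mu> \<bullet> b) (\<sigma> b) (x \<bullet> b)) \<partial>lborel) = 1"
proof -
  have "(\<integral>\<^sup>+x. ennreal (\<Prod>b\<in>Basis. normal_density (\<mu> \<bullet> b) (\<sigma> b) (x \<bullet> b)) \<partial>lborel)
      = (\<integral>\<^sup>+x. (\<Prod>b\<in>Basis. ennreal (normal_density (\<mu> \<bullet> b) (\<sigma> b) (x \<bullet> b))) \<partial>lborel)"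
    by (simp add: prod_ennreal)
  also have "\<dots> = 1"
    using assms by (subst nn_integral_lborel_prod) (auto simp: nn_integral_normal_density)
  finally show ?thesis .
qed

lemma prod_Basis_vec:
  "(\<Prod>b\<in>Basis. g b) = (\<Prod>i\<in>UNIV. \<Prod>u\<in>Basis. g (axis i u :: 'a::euclidean_space^'n::finite))"
proof -
  have Basis_eq: "(Basis :: ('a^'n) set) = (\<Union>i. axis i ` Basis)"
    by (auto simp: Basis_vec_def)
  have "(\<Prod>b\<in>Basis. g b) = (\<Prod>i\<in>UNIV. prod g (axis i ` Basis))"
    unfolding Basis_eq by (rule prod.UNION_disjoint) (auto simp: axis_eq_axis)
  moreover have "inj_on (axis i) (Basis :: 'a set)" for i :: 'n
    by (simp add: inj_on_def axis_eq_axis)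
  ultimately show ?thesis
    by (simp add: prod.reindex)
qed

lemma nn_integral_prod_std_normal_density:
  "(\<integral>\<^sup>+p. ennreal (\<Prod>i\<in>UNIV. normal_density 0 1 ((p::real^'n::finite) $ i)) \<partial>lborel) = 1"
proof -
  have "(\<Prod>b\<in>Basis. normal_density (0 \<bullet> b) 1 (p \<bullet> b)) = (\<Prod>i\<in>UNIV. normal_density 0 1 (p $ i))"
    for p :: "real^'n"
    by (simp only: prod_Basis_vec) (simp add: inner_axis)
  then show ?thesis
    using nn_integral_prod_normal_density[of "\<lambda>_. 1" "0 :: real^'n"] by simp
qed

lemma nn_integral_prod_normal_density_vec3:
  fixes A0 :: "real^'n::finite^'n^'k::finite" and s :: "'k \<Rightarrow> real"
  assumes "\<And>k. 0 < s k"
  shows "(\<integral>\<^sup>+\<xi>. ennreal (\<Prod>k\<in>UNIV. \<Prod>i\<in>UNIV. \<Prod>j\<in>UNIV.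
            normal_density (A0 $ k $ i $ j) (s k) ((\<xi>::real^'n^'n^'k) $ k $ i $ j)) \<partial>lborel) = 1"
proof -
  \<comment> \<open>a standard deviation on basis vectors that reads off the block index k of axis k (axis i (axis j 1))\<close>
  define \<sigma> where "\<sigma> b = (\<Sum>k\<in>UNIV. s k * ((b::real^'n^'n^'k) $ k \<bullet> b $ k))" for b
  have \<sigma>_axis: "\<sigma> (axis k u) = s k * (u \<bullet> u)" for k u
    by (simp add: \<sigma>_def axis_def if_distrib[of "\<lambda>x. x \<bullet> _"] if_distrib[of "\<lambda>x. _ * x"] cong: if_cong)
  have "0 < \<sigma> b" if "b \<in> Basis" for b
    using that assms by (auto simp: Basis_vec_def \<sigma>_axis inner_axis_axis)
  moreover have "(\<Prod>b\<in>Basis. normal_density (A0 \<bullet> b) (\<sigma> b) (\<xi> \<bullet> b))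
      = (\<Prod>k\<in>UNIV. \<Prod>i\<in>UNIV. \<Prod>j\<in>UNIV. normal_density (A0 $ k $ i $ j) (s k) (\<xi> $ k $ i $ j))" for \<xi>
    by (simp only: prod_Basis_vec) (simp add: inner_axis \<sigma>_axis inner_axis_axis)
  ultimately show ?thesis
    using nn_integral_prod_normal_density[of \<sigma> A0] by simp
qed

lemma normal_density_precision:
  "0 < \<eta> \<Longrightarrow> normal_density a (1 / sqrt \<eta>) x = sqrt (\<eta> / (2 * pi)) * exp (- (\<eta> / 2) * (x - a)\<^sup>2)"
  unfolding normal_density_def by (simp add: power_divide real_sqrt_divide field_simps)

lemma prod_std_normal_density:
  "(\<Prod>i\<in>UNIV. normal_density 0 1 (p $ i)) = (2 * pi) powr (- real CARD('n) / 2) * exp (- (norm p)\<^sup>2 / 2)"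
  for p :: "real^'n::finite"
proof -
  have "(2 * pi) powr (- real CARD('n) / 2) = ((2 * pi) powr (- 1 / 2)) ^ CARD('n)"
    by (simp add: powr_powr powr_realpow[symmetric])
  also have "(2 * pi) powr (- 1 / 2) = 1 / sqrt (2 * pi)"
    by (simp add: powr_minus_divide powr_half_sqrt)
  finally have "(2 * pi) powr (- real CARD('n) / 2) = (1 / sqrt (2 * pi)) ^ CARD('n)" .
  moreover have "exp (- (norm p)\<^sup>2 / 2) = (\<Prod>i\<in>UNIV. exp (- (p $ i)\<^sup>2 / 2))"
    unfolding power2_norm_eq_inner inner_vec_def
    by (simp add: exp_sum[symmetric] sum_negf sum_divide_distrib power2_eq_square)
  ultimately show ?thesis
    by (simp add: normal_density_def power_one_over prod_dividef)
qed

lemma gauss_factor_eq_prod_normal_density: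
  assumes "\<And>k. 0 < \<eta> k"
  shows "gauss_factor A0 \<eta> (p, \<xi>) = (\<Prod>i\<in>UNIV. normal_density 0 1 (p $ i))
    * (\<Prod>k\<in>UNIV. \<Prod>i\<in>UNIV. \<Prod>j\<in>UNIV. normal_density (A0 $ k $ i $ j) (1 / sqrt (\<eta> k)) (\<xi> $ k $ i $ j))"
  using nuK_density_eq[of "\<lambda>_. 1" A0 \<eta> "(0, p, \<xi>)"]
  by (simp add: nuK_density_def prod_std_normal_density normal_density_precision assms)

lemma nn_integral_pair_mult:
  fixes f :: "'a::euclidean_space \<Rightarrow> ennreal" and g :: "'b::euclidean_space \<Rightarrow> ennreal"
  assumes [measurable]: "f \<in> borel_measurable borel" "g \<in> borel_measurable borel"
  shows "(\<integral>\<^sup>+z. f (fst z) * g (snd z) \<partial>lborel) = (\<integral>\<^sup>+x. f x \<partial>lborel) * (\<integral>\<^sup>+y. g y \<partial>lborel)"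
proof -
  have "(\<integral>\<^sup>+z. f (fst z) * g (snd z) \<partial>lborel) = (\<integral>\<^sup>+z. f (fst z) * g (snd z) \<partial>(lborel \<Otimes>\<^sub>M lborel))"
    by (simp add: lborel_prod)
  also have "\<dots> = (\<integral>\<^sup>+x. \<integral>\<^sup>+y. f x * g y \<partial>lborel \<partial>lborel)"
    using lborel.nn_integral_fst[of "\<lambda>z. f (fst z) * g (snd z)" lborel] by simp
  also have "\<dots> = (\<integral>\<^sup>+x. f x \<partial>lborel) * (\<integral>\<^sup>+y. g y \<partial>lborel)"
    by (simp add: nn_integral_cmult nn_integral_multc)
  finally show ?thesis .
qed

lemma continuous_on_gauss_factor: "continuous_on UNIV (gauss_factor A0 \<eta>)"
  using gauss_exponent_has_derivative[THEN has_derivative_continuous]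
  unfolding gauss_factor_def[abs_def]
  by (intro continuous_intros continuous_at_imp_continuous_on) auto

lemma nn_integral_gauss_factor:
  fixes A0 :: "real^'n::finite^'n^'k::finite"
  assumes "\<And>k. 0 < \<eta> k"
  shows "(\<integral>\<^sup>+y. ennreal (gauss_factor A0 \<eta> y) \<partial>lborel) = 1"
proof -
  let ?G = "\<lambda>p::real^'n. \<Prod>i\<in>UNIV. normal_density 0 1 (p $ i)"
  let ?H = "\<lambda>\<xi>::real^'n^'n^'k.
    \<Prod>k\<in>UNIV. \<Prod>i\<in>UNIV. \<Prod>j\<in>UNIV. normal_density (A0 $ k $ i $ j) (1 / sqrt (\<eta> k)) (\<xi> $ k $ i $ j)"
  have "continuous_on UNIV ?G"
    unfolding normal_density_def by (intro continuous_intros) auto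
  moreover have "continuous_on UNIV ?H"
    unfolding normal_density_def using assms by (intro continuous_intros) (auto simp: less_imp_neq[symmetric])
  ultimately have [measurable]: "?G \<in> borel_measurable borel" "?H \<in> borel_measurable borel"
    by (simp_all add: borel_measurable_continuous_onI)
  have "gauss_factor A0 \<eta> y = ?G (fst y) * ?H (snd y)" for y
    using gauss_factor_eq_prod_normal_density[OF assms, where p="fst y" and \<xi>="snd y"] by simp
  then have "(\<integral>\<^sup>+y. ennreal (gauss_factor A0 \<eta> y) \<partial>lborel)
      = (\<integral>\<^sup>+y. ennreal (?G (fst y)) * ennreal (?H (snd y)) \<partial>lborel)"
    by (simp add: ennreal_mult prod_nonneg)
  also have "\<dots> = 1"
    using assms
    by (subst nn_integral_pair_mult[where f="\<lambda>p. ennreal (?G p)" and g="\<lambda>\<xi>. ennreal (?H \<xi>)"])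
      (simp_all add: nn_integral_prod_std_normal_density nn_integral_prod_normal_density_vec3)
  finally show ?thesis .
qed

lemma gauss_factor_pos: "(\<And>k. 0 < \<eta> k) \<Longrightarrow> 0 < gauss_factor A0 \<eta> y"
  unfolding gauss_factor_def by (intro mult_pos_pos prod_pos) auto

lemma continuous_on_nuK_density:
  assumes "continuous_on UNIV \<pi>"
  shows "continuous_on UNIV (nuK_density \<pi> A0 \<eta>)"
proof -
  have "continuous_on UNIV (\<lambda>z. \<pi> (fst z))" "continuous_on UNIV (\<lambda>z. gauss_factor A0 \<eta> (snd z))"
    by (auto intro!: continuous_on_compose2[OF assms] continuous_on_compose2[OF continuous_on_gauss_factor]
        continuous_on_fst continuous_on_snd continuous_on_id)
  then show ?thesis
    unfolding nuK_density_eq[abs_def] by (rule continuous_on_mult)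
qed

lemma nn_integral_nuK_density_Times:
  assumes \<pi>: "continuous_on UNIV \<pi>" "\<And>\<theta>. 0 \<le> \<pi> \<theta>" and \<eta>: "\<And>k. 0 < \<eta> k"
    and [measurable]: "A \<in> sets borel"
  shows "(\<integral>\<^sup>+z. ennreal (nuK_density \<pi> A0 \<eta> z) * indicator (A \<times> UNIV) z \<partial>lborel)
    = (\<integral>\<^sup>+\<theta>. ennreal (\<pi> \<theta>) * indicator A \<theta> \<partial>lborel)"
proof -
  have [measurable]: "\<pi> \<in> borel_measurable borel" "gauss_factor A0 \<eta> \<in> borel_measurable borel"
    using \<pi>(1) continuous_on_gauss_factor by (auto intro: borel_measurable_continuous_onI)
  have "(\<integral>\<^sup>+z. ennreal (nuK_density \<pi> A0 \<eta> z) * indicator (A \<times> UNIV) z \<partial>lborel)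
      = (\<integral>\<^sup>+z. (ennreal (\<pi> (fst z)) * indicator A (fst z)) * ennreal (gauss_factor A0 \<eta> (snd z)) \<partial>lborel)"
    using \<pi>(2) gauss_factor_pos[of \<eta> A0] \<eta>
    by (intro nn_integral_cong) (auto simp: nuK_density_eq ennreal_mult less_imp_le split: split_indicator)
  also have "\<dots> = (\<integral>\<^sup>+\<theta>. ennreal (\<pi> \<theta>) * indicator A \<theta> \<partial>lborel) * (\<integral>\<^sup>+y. ennreal (gauss_factor A0 \<eta> y) \<partial>lborel)"
    by (rule nn_integral_pair_mult) auto
  finally show ?thesis
    by (simp add: nn_integral_gauss_factor[OF \<eta>])
qed

lemma prob_space_nuK:
  assumes "continuous_on UNIV \<pi>" "\<And>\<theta>. 0 \<le> \<pi> \<theta>" "(\<pi> has_integral 1) UNIV" "\<And>k. 0 < \<eta> k"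
  shows "prob_space (nuK \<pi> A0 \<eta>)"
proof
  have \<pi>_measurable: "\<pi> \<in> borel_measurable borel"
    using assms(1) by (rule borel_measurable_continuous_onI)
  have [measurable]: "nuK_density \<pi> A0 \<eta> \<in> borel_measurable borel"
    using continuous_on_nuK_density[OF assms(1)] by (rule borel_measurable_continuous_onI)
  have "emeasure (nuK \<pi> A0 \<eta>) (space (nuK \<pi> A0 \<eta>))
      = (\<integral>\<^sup>+z. ennreal (nuK_density \<pi> A0 \<eta> z) * indicator (UNIV \<times> UNIV) z \<partial>lborel)"
    unfolding nuK_def by (subst emeasure_density) auto
  also have "\<dots> = (\<integral>\<^sup>+\<theta>. ennreal (\<pi> \<theta>) \<partial>lborel)"
    using nn_integral_nuK_density_Times[OF assms(1,2,4), of UNIV] by simp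
  also have "\<dots> = 1"
    using nn_integral_has_integral_lborel[OF \<pi>_measurable assms(2,3)] by simp
  finally show "emeasure (nuK \<pi> A0 \<eta>) (space (nuK \<pi> A0 \<eta>)) = 1" .
qed

lemma distr_fst_nuK:
  fixes \<pi> :: "real^'n::finite \<Rightarrow> real" and A0 :: "real^'n^'n^'k::finite"
  assumes "continuous_on UNIV \<pi>" "\<And>\<theta>. 0 \<le> \<pi> \<theta>" "\<And>k. 0 < \<eta> k"
  shows "distr (nuK \<pi> A0 \<eta>) lborel fst = density lborel (\<lambda>\<theta>. ennreal (\<pi> \<theta>))"
proof (rule measure_eqI)
  show "sets (distr (nuK \<pi> A0 \<eta>) lborel fst) = sets (density lborel (\<lambda>\<theta>. ennreal (\<pi> \<theta>)))"
    by (simp only: sets_distr sets_density)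
next
  fix A assume "A \<in> sets (distr (nuK \<pi> A0 \<eta>) lborel fst)"
  then have A: "A \<in> sets borel" by simp
  have [measurable]: "\<pi> \<in> borel_measurable borel"
    using assms(1) by (rule borel_measurable_continuous_onI)
  have [measurable]: "nuK_density \<pi> A0 \<eta> \<in> borel_measurable borel"
    using continuous_on_nuK_density[OF assms(1)] by (rule borel_measurable_continuous_onI)
  have fst_measurable: "fst \<in> borel_measurable (borel :: ('n, 'k) state measure)"
    by (intro borel_measurable_continuous_onI continuous_intros)
  have [measurable]: "A \<times> UNIV \<in> sets (borel :: ('n, 'k) state measure)"
    using measurable_sets[OF fst_measurable A] by (simp add: vimage_fst)
  have "emeasure (distr (nuK \<pi> A0 \<eta>) lborel fst) A = emeasure (nuK \<pi> A0 \<eta>) (fst -` A \<inter> space (nuK \<pi> A0 \<eta>))"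
    using fst_measurable A by (intro emeasure_distr) (simp_all add: nuK_def)
  also have "fst -` A \<inter> space (nuK \<pi> A0 \<eta>) = A \<times> UNIV"
    by (auto simp: nuK_def)
  also have "emeasure (nuK \<pi> A0 \<eta>) (A \<times> UNIV)
      = (\<integral>\<^sup>+z. ennreal (nuK_density \<pi> A0 \<eta> z) * indicator (A \<times> UNIV) z \<partial>lborel)"
    unfolding nuK_def by (subst emeasure_density) simp_all
  also have "\<dots> = (\<integral>\<^sup>+\<theta>. ennreal (\<pi> \<theta>) * indicator A \<theta> \<partial>lborel)"
    by (rule nn_integral_nuK_density_Times[OF assms A])
  also have "\<dots> = emeasure (density lborel (\<lambda>\<theta>. ennreal (\<pi> \<theta>))) A"
    using A by (subst emeasure_density) simp_all
  finally show "emeasure (distr (nuK \<pi> A0 \<eta>) lborel fst) A = emeasure (density lborel (\<lambda>\<theta>. ennreal (\<pi> \<theta>))) A" .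
qed

section \<open>The generator integrates to zero against the invariant measure\<close>

text \<open>With \<open>c k = f\<^sub>k(\<theta>)\<close>, \<open>X = \<xi>\<close>, \<open>A = A\<^sup>k\<close> and \<open>L = \<nabla> log \<pi>\<close> this is \<open>L\<^sup>* \<rho> / \<rho> = 0\<close>.\<close>

lemma langevin_adjoint_identity:
  fixes c :: "'k::finite \<Rightarrow> real" and X A :: "'k \<Rightarrow> 'n::finite \<Rightarrow> 'n \<Rightarrow> real" and p L :: "'n \<Rightarrow> real"
  defines "\<delta> \<equiv> \<lambda>i j. if i = j then 1 else 0 :: real"
  shows "(\<Sum>i\<in>UNIV. p i * L i)
    + (\<Sum>i\<in>UNIV. - (\<Sum>k\<in>UNIV. c k * X k i i) - (L i - (\<Sum>j\<in>UNIV. (\<Sum>k\<in>UNIV. c k * X k i j) * p j)) * p i)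
    + (\<Sum>i\<in>UNIV. \<Sum>j\<in>UNIV. (\<Sum>k\<in>UNIV. c k * A k i j) * \<delta> i j - (\<Sum>k\<in>UNIV. c k * A k i j) * p i * p j)
    - (\<Sum>k\<in>UNIV. \<Sum>i\<in>UNIV. \<Sum>j\<in>UNIV. c k * (p i * p j - \<delta> i j) * (X k i j - A k i j)) = 0"
proof -
  have diagonal: "(\<Sum>k\<in>UNIV. c k * X k i i) = (\<Sum>j\<in>UNIV. \<Sum>k\<in>UNIV. c k * X k i j * \<delta> i j)" for i
    by (simp add: \<delta>_def if_distrib[of "\<lambda>x. _ * x"] sum.swap[of _ UNIV UNIV] cong: if_cong)
  have "(\<Sum>i\<in>UNIV. p i * L i)
      + (\<Sum>i\<in>UNIV. - (\<Sum>k\<in>UNIV. c k * X k i i) - (L i - (\<Sum>j\<in>UNIV. (\<Sum>k\<in>UNIV. c k * X k i j) * p j)) * p i)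
      = (\<Sum>i\<in>UNIV. \<Sum>j\<in>UNIV. \<Sum>k\<in>UNIV. c k * X k i j * (p i * p j - \<delta> i j))"
    unfolding diagonal
    by (simp add: sum.distrib[symmetric] sum_subtractf[symmetric] sum_distrib_left sum_distrib_right algebra_simps)
  moreover have "(\<Sum>i\<in>UNIV. \<Sum>j\<in>UNIV. (\<Sum>k\<in>UNIV. c k * A k i j) * \<delta> i j - (\<Sum>k\<in>UNIV. c k * A k i j) * p i * p j)
      = - (\<Sum>i\<in>UNIV. \<Sum>j\<in>UNIV. \<Sum>k\<in>UNIV. c k * A k i j * (p i * p j - \<delta> i j))"
  proof -
    have "(\<Sum>k\<in>UNIV. c k * A k i j) * \<delta> i j - (\<Sum>k\<in>UNIV. c k * A k i j) * p i * p j
        = - (\<Sum>k\<in>UNIV. c k * A k i j * (p i * p j - \<delta> i j))" for i j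
      by (simp only: sum_distrib_right[symmetric]) (simp add: algebra_simps)
    then show ?thesis
      by (simp add: sum_negf)
  qed
  moreover have "(\<Sum>k\<in>UNIV. \<Sum>i\<in>UNIV. \<Sum>j\<in>UNIV. c k * (p i * p j - \<delta> i j) * (X k i j - A k i j))
      = (\<Sum>i\<in>UNIV. \<Sum>j\<in>UNIV. \<Sum>k\<in>UNIV. c k * (p i * p j - \<delta> i j) * (X k i j - A k i j))"
    by (subst sum.swap) (subst (2) sum.swap, rule refl)
  ultimately show ?thesis
    by (simp add: sum_subtractf[symmetric] sum.distrib[symmetric] algebra_simps)
qed

lemma sum_mult_axis_nth3:
  "(\<Sum>k'\<in>UNIV. \<Sum>i'\<in>UNIV. \<Sum>j'\<in>UNIV.
      c k' i' j' * (axis k (axis i (axis j (1::real))) :: real^'n::finite^'n^'k::finite) $ k' $ i' $ j') = c k i j"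
proof -
  have "(\<Sum>j'\<in>UNIV. c k' i' j' * (axis k (axis i (axis j (1::real))) :: real^'n^'n^'k) $ k' $ i' $ j')
     = (if k' = k then if i' = i then c k i j else 0 else 0)" for k' i'
    by (cases "k' = k"; cases "i' = i") (simp_all add: axis_def if_distrib[of "\<lambda>x. _ * x"] cong: if_cong)
  moreover have "(\<Sum>i'\<in>UNIV. if k' = k then if i' = i then c k i j else 0 else 0) = (if k' = k then c k i j else 0)" for k'
    by (cases "k' = k") simp_all
  ultimately show ?thesis
    by simp
qed

locale adaptive_langevin =
  fixes \<pi> :: "real^'n::finite \<Rightarrow> real" and f :: "'k::finite \<Rightarrow> real^'n \<Rightarrow> real"
    and A0 :: "real^'n^'n^'k" and \<eta> :: "'k \<Rightarrow> real"
  assumes posterior_pos: "\<And>\<theta>. 0 < \<pi> \<theta>" and log_posterior_smooth: "smooth (\<lambda>\<theta>. ln (\<pi> \<theta>))"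
    and basis_smooth: "\<And>k. smooth (f k)" and eta_positive: "\<And>k. 0 < \<eta> k"
begin

abbreviation \<rho> :: "('n, 'k) state \<Rightarrow> real" where
  "\<rho> \<equiv> nuK_density \<pi> A0 \<eta>"

definition log_nuK_derivative :: "('n, 'k) state \<Rightarrow> ('n, 'k) state \<Rightarrow> real" where
  "log_nuK_derivative z v = pdiff (fst v) (\<lambda>\<theta>. ln (\<pi> \<theta>)) (fst z) - fst (snd z) \<bullet> fst (snd v)
     - (\<Sum>k\<in>UNIV. \<Sum>i\<in>UNIV. \<Sum>j\<in>UNIV. \<eta> k * (snd (snd z) $ k $ i $ j - A0 $ k $ i $ j) * snd (snd v) $ k $ i $ j)"

lemma pi_has_derivative:
  "(\<pi> has_derivative (\<lambda>h. pdiff h (\<lambda>\<theta>. ln (\<pi> \<theta>)) \<theta> * \<pi> \<theta>)) (at \<theta>)"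
proof -
  have "((\<lambda>\<theta>. ln (\<pi> \<theta>)) has_derivative frechet_derivative (\<lambda>\<theta>. ln (\<pi> \<theta>)) (at \<theta>)) (at \<theta>)"
    using log_posterior_smooth smooth_differentiable frechet_derivative_works by blast
  from DERIV_compose_FDERIV[OF DERIV_exp this] show ?thesis
    using posterior_pos by (simp add: pdiff_def mult.commute)
qed

lemma nuK_density_has_derivative: "(\<rho> has_derivative (\<lambda>v. log_nuK_derivative z v * \<rho> z)) (at z)"
proof -
  have "((\<lambda>z. \<pi> (fst z) * gauss_factor A0 \<eta> (snd z)) has_derivative
      (\<lambda>v. \<pi> (fst z) * ((- (fst (snd z) \<bullet> fst (snd v))
        - (\<Sum>k\<in>UNIV. \<Sum>i\<in>UNIV. \<Sum>j\<in>UNIV. \<eta> k * (snd (snd z) $ k $ i $ j - A0 $ k $ i $ j) * snd (snd v) $ k $ i $ j))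
        * gauss_factor A0 \<eta> (snd z)) + pdiff (fst v) (\<lambda>\<theta>. ln (\<pi> \<theta>)) (fst z) * \<pi> (fst z) * gauss_factor A0 \<eta> (snd z))) (at z)"
    by (intro has_derivative_mult has_derivative_compose[OF has_derivative_fst[OF has_derivative_ident] pi_has_derivative]
        has_derivative_compose[OF has_derivative_snd[OF has_derivative_ident] gauss_factor_has_derivative])
  then show ?thesis
    unfolding nuK_density_eq[abs_def] log_nuK_derivative_def
    by (rule has_derivative_eq_rhs) (simp add: fun_eq_iff algebra_simps)
qed

lemma nuK_density_pos: "0 < \<rho> z"
  unfolding nuK_density_eq by (intro mult_pos_pos posterior_pos gauss_factor_pos eta_positive)

lemma nuK_density_differentiable: "\<rho> differentiable (at z)"
  using nuK_density_has_derivative differentiable_def by blast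

lemma pdiff_nuK_density: "pdiff v \<rho> z = log_nuK_derivative z v * \<rho> z"
  using pdiff_eq[OF nuK_density_has_derivative] .

lemma continuous_on_log_nuK_derivative: "continuous_on UNIV (\<lambda>z. log_nuK_derivative z v)"
proof -
  have "continuous_on UNIV (pdiff (fst v) (\<lambda>\<theta>. ln (\<pi> \<theta>)))"
    using log_posterior_smooth by (intro smooth_continuous_on smooth_pdiff)
  then have "continuous_on UNIV (\<lambda>z::('n, 'k) state. pdiff (fst v) (\<lambda>\<theta>. ln (\<pi> \<theta>)) (fst z))"
    by (rule continuous_on_compose2) (auto intro: continuous_on_fst continuous_on_id)
  then show ?thesis
    unfolding log_nuK_derivative_def by (intro continuous_intros)
qed

lemma log_nuK_derivative_dir_theta:
  "log_nuK_derivative z (dir_theta i) = pdiff (axis i 1) (\<lambda>\<theta>. ln (\<pi> \<theta>)) (fst z)"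
  by (simp add: log_nuK_derivative_def dir_theta_def)

lemma log_nuK_derivative_dir_p: "log_nuK_derivative z (dir_p i) = - fst (snd z) $ i"
  using log_posterior_smooth
  by (simp add: log_nuK_derivative_def dir_p_def inner_axis pdiff_zero_direction smooth_differentiable)

lemma log_nuK_derivative_dir_xi:
  "log_nuK_derivative z (dir_xi k i j) = - \<eta> k * (snd (snd z) $ k $ i $ j - A0 $ k $ i $ j)"
proof -
  have "pdiff 0 (\<lambda>\<theta>. ln (\<pi> \<theta>)) (fst z) = 0"
    using log_posterior_smooth by (simp add: pdiff_zero_direction smooth_differentiable)
  then show ?thesis
    unfolding log_nuK_derivative_def dir_xi_def fst_conv snd_conv sum_mult_axis_nth3 by simp
qed

lemma opposite_integrals_nuK_weighted:
  assumes "smooth \<psi>" "compact S" "\<And>z. z \<notin> S \<Longrightarrow> \<psi> z = 0"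
    and "\<And>z. g differentiable (at z)" "continuous_on UNIV (pdiff v g)"
  shows "opposite_integrals lborel (\<lambda>z. \<rho> z * g z * pdiff v \<psi> z)
           (\<lambda>z. \<psi> z * ((pdiff v g z + g z * log_nuK_derivative z v) * \<rho> z))"
  using opposite_integrals_weighted[OF assms(1-3) nuK_density_differentiable pdiff_nuK_density
      continuous_on_log_nuK_derivative assms(4,5)] .

lemma bounded_linear_p_nth: "bounded_linear (\<lambda>z::('n, 'k) state. fst (snd z) $ i)"
  by (intro bounded_linear_compose[OF bounded_linear_vec_nth] bounded_linear_compose[OF bounded_linear_fst bounded_linear_snd])

lemma bounded_linear_theta_xi: "bounded_linear (\<lambda>z::('n, 'k) state. (fst z, snd (snd z)))"
  by (intro bounded_linear_Pair bounded_linear_fst bounded_linear_compose[OF bounded_linear_snd bounded_linear_snd])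

lemma bounded_linear_theta_p: "bounded_linear (\<lambda>z::('n, 'k) state. (fst z, fst (snd z)))"
  by (intro bounded_linear_Pair bounded_linear_fst bounded_linear_compose[OF bounded_linear_fst bounded_linear_snd])

lemma f_differentiable: "f k differentiable (at \<theta>)"
  using basis_smooth smooth_differentiable by blast

lemma xi_of_nth: "xi_of f \<xi> \<theta> $ i $ j = (\<Sum>k\<in>UNIV. f k \<theta> * \<xi> $ k $ i $ j)"
  by (simp add: xi_of_def)

lemma Amat_nth: "Amat f A0 \<theta> $ i $ j = (\<Sum>k\<in>UNIV. f k \<theta> * A0 $ k $ i $ j)"
  by (simp add: Amat_def)

lemma differentiable_xi_of_nth:
  "(\<lambda>y. xi_of f (snd y) (fst y) $ i $ j) differentiable (at (y :: (real^'n) \<times> (real^'n^'n^'k)))"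
proof -
  have "bounded_linear (\<lambda>y::(real^'n) \<times> (real^'n^'n^'k). snd y $ k $ i $ j)" for k
    by (intro bounded_linear_compose[OF bounded_linear_vec_nth] bounded_linear_snd)
  then show ?thesis
    unfolding xi_of_nth
    by (intro differentiable_sum ballI differentiable_mult bounded_linear_imp_differentiable
        differentiable_compose_linear[OF bounded_linear_fst f_differentiable]) auto
qed

lemma differentiable_Amat_nth: "(\<lambda>\<theta>. Amat f A0 \<theta> $ i $ j) differentiable (at \<theta>)"
  unfolding Amat_nth by (intro differentiable_sum ballI differentiable_mult f_differentiable) auto

lemma pdiff_dir_p_mult_p_nth:
  fixes c :: "(real^'n) \<times> (real^'n^'n^'k) \<Rightarrow> real"
  assumes "\<And>y. c differentiable (at y)"
  shows "pdiff (dir_p i) (\<lambda>z. c (fst z, snd (snd z)) * fst (snd z) $ j) z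
    = (if i = j then c (fst z, snd (snd z)) else 0)"
proof -
  have "pdiff (dir_p i) (\<lambda>z. c (fst z, snd (snd z))) z = 0"
    by (rule pdiff_compose_linear_eq_0[OF bounded_linear_theta_xi assms]) (simp add: dir_p_def zero_prod_def)
  then show ?thesis
    using differentiable_compose_linear[OF bounded_linear_theta_xi assms]
      bounded_linear_imp_differentiable[OF bounded_linear_p_nth]
    by (simp add: pdiff_mult pdiff_linear[OF bounded_linear_p_nth] dir_p_def axis_def)
qed

lemma xi_of_mult_p_nth:
  "(xi_of f (snd (snd z)) (fst z) *v fst (snd z)) $ i
    = (\<Sum>j\<in>UNIV. xi_of f (snd (snd z)) (fst z) $ i $ j * fst (snd z) $ j)"
  by (simp add: matrix_vector_mult_def)

lemma differentiable_xi_of_nth_state: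
  "(\<lambda>z::('n, 'k) state. xi_of f (snd (snd z)) (fst z) $ i $ j) differentiable (at z)"
  using differentiable_compose_linear[OF bounded_linear_theta_xi, where G="\<lambda>y. xi_of f (snd y) (fst y) $ i $ j"]
    differentiable_xi_of_nth by simp

lemma differentiable_xi_of_mult_p_nth:
  "(\<lambda>z::('n, 'k) state. (xi_of f (snd (snd z)) (fst z) *v fst (snd z)) $ i) differentiable (at z)"
proof -
  have "(\<lambda>z::('n, 'k) state. xi_of f (snd (snd z)) (fst z) $ i $ j * fst (snd z) $ j) differentiable (at z)" for j
    by (intro differentiable_mult differentiable_xi_of_nth_state
        bounded_linear_imp_differentiable[OF bounded_linear_p_nth])
  then show ?thesis
    unfolding xi_of_mult_p_nth by (intro differentiable_sum) auto
qed

lemma pdiff_dir_p_xi_of_mult_p_nth: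
  "pdiff (dir_p i) (\<lambda>z::('n, 'k) state. (xi_of f (snd (snd z)) (fst z) *v fst (snd z)) $ i) z
    = xi_of f (snd (snd z)) (fst z) $ i $ i"
proof -
  let ?c = "\<lambda>j y. xi_of f (snd y) (fst y) $ i $ j"
  have term_diff: "(\<lambda>z::('n, 'k) state. ?c j (fst z, snd (snd z)) * fst (snd z) $ j) differentiable (at z)" for j
    by (intro differentiable_mult differentiable_compose_linear[OF bounded_linear_theta_xi]
        differentiable_xi_of_nth bounded_linear_imp_differentiable[OF bounded_linear_p_nth])
  have "pdiff (dir_p i) (\<lambda>z. ?c j (fst z, snd (snd z)) * fst (snd z) $ j) z
      = (if i = j then ?c j (fst z, snd (snd z)) else 0)" for j
    using pdiff_dir_p_mult_p_nth[of "?c j", OF differentiable_xi_of_nth] by simp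
  then show ?thesis
    unfolding xi_of_mult_p_nth using term_diff by (simp add: pdiff_sum)
qed

context
  fixes \<phi> :: "('n, 'k) state \<Rightarrow> real" and S :: "('n, 'k) state set"
  assumes phi_smooth: "smooth \<phi>" and S_compact: "compact S" and phi_support: "\<And>z. z \<notin> S \<Longrightarrow> \<phi> z = 0"
begin

lemma opposite_integrals_weighted_pdiff_phi:
  assumes "\<And>z. g differentiable (at z)" "continuous_on UNIV (pdiff v g)"
  shows "opposite_integrals lborel (\<lambda>z. \<rho> z * g z * pdiff v (iter_pdiff ws \<phi>) z)
           (\<lambda>z. iter_pdiff ws \<phi> z * ((pdiff v g z + g z * log_nuK_derivative z v) * \<rho> z))"
proof (rule opposite_integrals_nuK_weighted[OF _ S_compact _ assms])
  show "smooth (iter_pdiff ws \<phi>)"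
    using phi_smooth by (induction ws) (simp_all add: smooth_pdiff)
  show "iter_pdiff ws \<phi> z = 0" if "z \<notin> S" for z
    using that by (induction ws arbitrary: z)
      (simp_all add: phi_support pdiff_eq_0_outside[OF compact_imp_closed[OF S_compact]])
qed

lemma opposite_integrals_theta_term:
  "opposite_integrals lborel (\<lambda>z. \<rho> z * fst (snd z) $ i * pdiff (dir_theta i) \<phi> z)
     (\<lambda>z. \<phi> z * (fst (snd z) $ i * pdiff (axis i 1) (\<lambda>\<theta>. ln (\<pi> \<theta>)) (fst z) * \<rho> z))"
proof -
  have "pdiff (dir_theta i) (\<lambda>z::('n, 'k) state. fst (snd z) $ i) = (\<lambda>z. 0)"
    by (simp add: fun_eq_iff pdiff_linear[OF bounded_linear_p_nth] dir_theta_def)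
  with opposite_integrals_weighted_pdiff_phi[OF bounded_linear_imp_differentiable[OF bounded_linear_p_nth[of i]],
      where v="dir_theta i" and ws="[]"]
  show ?thesis
    by (simp add: log_nuK_derivative_dir_theta)
qed

lemma opposite_integrals_p_term:
  "opposite_integrals lborel
     (\<lambda>z. \<rho> z * (pdiff (axis i 1) (\<lambda>\<theta>. ln (\<pi> \<theta>)) (fst z) - (xi_of f (snd (snd z)) (fst z) *v fst (snd z)) $ i)
        * pdiff (dir_p i) \<phi> z)
     (\<lambda>z. \<phi> z * ((- xi_of f (snd (snd z)) (fst z) $ i $ i
        - (pdiff (axis i 1) (\<lambda>\<theta>. ln (\<pi> \<theta>)) (fst z) - (xi_of f (snd (snd z)) (fst z) *v fst (snd z)) $ i)
          * fst (snd z) $ i) * \<rho> z))"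
proof -
  let ?L = "\<lambda>z::('n, 'k) state. pdiff (axis i 1) (\<lambda>\<theta>. ln (\<pi> \<theta>)) (fst z)"
  let ?X = "\<lambda>z::('n, 'k) state. (xi_of f (snd (snd z)) (fst z) *v fst (snd z)) $ i"
  have L_diff: "?L differentiable (at z)" for z
    using log_posterior_smooth
    by (intro differentiable_compose_linear[OF bounded_linear_fst] smooth_differentiable smooth_pdiff)
  have "pdiff (dir_p i) ?L z = 0" for z
    using log_posterior_smooth
    by (intro pdiff_compose_linear_eq_0[OF bounded_linear_fst, where v="dir_p i"] smooth_differentiable smooth_pdiff)
      (auto simp: dir_p_def)
  then have pdiff_g: "pdiff (dir_p i) (\<lambda>z. ?L z - ?X z) = (\<lambda>z. - xi_of f (snd (snd z)) (fst z) $ i $ i)"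
    using L_diff differentiable_xi_of_mult_p_nth
    by (simp add: fun_eq_iff pdiff_diff pdiff_dir_p_xi_of_mult_p_nth)
  have "continuous_on UNIV (\<lambda>z::('n, 'k) state. - xi_of f (snd (snd z)) (fst z) $ i $ i)"
    by (intro continuous_intros continuous_on_UNIV_if_differentiable differentiable_xi_of_nth_state)
  with opposite_integrals_weighted_pdiff_phi[of "\<lambda>z. ?L z - ?X z" "dir_p i" "[]"]
    L_diff differentiable_xi_of_mult_p_nth pdiff_g
  show ?thesis
    by (simp add: log_nuK_derivative_dir_p)
qed

lemma opposite_integrals_second_order_term:
  "opposite_integrals lborel (\<lambda>z. \<rho> z * Amat f A0 (fst z) $ i $ j * iter_pdiff [dir_p i, dir_p j] \<phi> z)
     (\<lambda>z. \<phi> z * ((Amat f A0 (fst z) $ i $ j * (if i = j then 1 else 0)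
        - Amat f A0 (fst z) $ i $ j * fst (snd z) $ i * fst (snd z) $ j) * \<rho> z))"
proof -
  let ?a = "\<lambda>z::('n, 'k) state. Amat f A0 (fst z) $ i $ j"
  have a_diff: "?a differentiable (at z)" for z
    by (intro differentiable_compose_linear[OF bounded_linear_fst] differentiable_Amat_nth)
  have "pdiff (dir_p i) ?a z = 0" for z
    by (intro pdiff_compose_linear_eq_0[OF bounded_linear_fst, where v="dir_p i"] differentiable_Amat_nth)
      (simp add: dir_p_def)
  then have "opposite_integrals lborel (\<lambda>z. \<rho> z * ?a z * iter_pdiff [dir_p i, dir_p j] \<phi> z)
      (\<lambda>z. pdiff (dir_p j) \<phi> z * (- ?a z * fst (snd z) $ i * \<rho> z))"
    using opposite_integrals_weighted_pdiff_phi[OF a_diff, where v="dir_p i" and ws="[dir_p j]"]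
    by (simp add: log_nuK_derivative_dir_p)
  moreover have "opposite_integrals lborel (\<lambda>z. \<rho> z * (?a z * fst (snd z) $ i) * pdiff (dir_p j) \<phi> z)
      (\<lambda>z. \<phi> z * ((?a z * (if i = j then 1 else 0) - ?a z * fst (snd z) $ i * fst (snd z) $ j) * \<rho> z))"
  proof -
    let ?c = "\<lambda>y::(real^'n) \<times> (real^'n^'n^'k). Amat f A0 (fst y) $ i $ j"
    have c_diff: "?c differentiable (at y)" for y
      by (intro differentiable_compose_linear[OF bounded_linear_fst] differentiable_Amat_nth)
    have g_diff: "(\<lambda>z::('n, 'k) state. ?a z * fst (snd z) $ i) differentiable (at z)" for z
      by (intro differentiable_mult a_diff bounded_linear_imp_differentiable[OF bounded_linear_p_nth])
    have "pdiff (dir_p j) (\<lambda>z. ?a z * fst (snd z) $ i) = (\<lambda>z. if j = i then ?a z else 0)"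
      using pdiff_dir_p_mult_p_nth[of ?c, OF c_diff] by (simp add: fun_eq_iff)
    moreover have "continuous_on UNIV (\<lambda>z. if j = i then ?a z else 0)"
      using continuous_on_UNIV_if_differentiable[OF a_diff] by (cases "j = i") simp_all
    ultimately show ?thesis
      using opposite_integrals_weighted_pdiff_phi[OF g_diff, where v="dir_p j" and ws="[]"]
      by (cases "i = j") (simp_all add: log_nuK_derivative_dir_p algebra_simps)
  qed
  ultimately show ?thesis
    by (rule opposite_integrals_trans) (simp add: algebra_simps)
qed

lemma opposite_integrals_xi_term:
  "opposite_integrals lborel
     (\<lambda>z. \<rho> z * (f k (fst z) / \<eta> k * (fst (snd z) $ i * fst (snd z) $ j - (if i = j then 1 else 0)))
        * pdiff (dir_xi k i j) \<phi> z)
     (\<lambda>z. \<phi> z * (- f k (fst z) * (fst (snd z) $ i * fst (snd z) $ j - (if i = j then 1 else 0))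
        * (snd (snd z) $ k $ i $ j - A0 $ k $ i $ j) * \<rho> z))"
proof -
  let ?c = "\<lambda>y::(real^'n) \<times> (real^'n). f k (fst y) / \<eta> k * (snd y $ i * snd y $ j - (if i = j then 1 else 0))"
  have "bounded_linear (\<lambda>y::(real^'n) \<times> (real^'n). snd y $ i)" for i
    by (intro bounded_linear_compose[OF bounded_linear_vec_nth] bounded_linear_snd)
  then have p_diff: "(\<lambda>y::(real^'n) \<times> (real^'n). snd y $ i) differentiable (at y)" for i y
    by (rule bounded_linear_imp_differentiable)
  have c_diff: "?c differentiable (at y)" for y
    using eta_positive[of k]
    by (intro differentiable_mult differentiable_divide differentiable_diff differentiable_const p_diff
        differentiable_compose_linear[OF bounded_linear_fst f_differentiable]) auto
  have "pdiff (dir_xi k i j) (\<lambda>z. ?c (fst z, fst (snd z))) z = 0" for z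
    by (intro pdiff_compose_linear_eq_0[OF bounded_linear_theta_p c_diff]) (simp add: dir_xi_def zero_prod_def)
  then show ?thesis
    using opposite_integrals_weighted_pdiff_phi[OF differentiable_compose_linear[OF bounded_linear_theta_p c_diff],
        where v="dir_xi k i j" and ws="[]"] eta_positive[of k]
    by (simp add: log_nuK_derivative_dir_xi mult_ac)
qed

lemma nuK_density_mult_generator:
  "\<rho> z * generator \<pi> f A0 \<eta> \<phi> z =
      (\<Sum>i\<in>UNIV. \<rho> z * fst (snd z) $ i * pdiff (dir_theta i) \<phi> z)
    + (\<Sum>i\<in>UNIV. \<rho> z * (pdiff (axis i 1) (\<lambda>\<theta>. ln (\<pi> \<theta>)) (fst z)
        - (xi_of f (snd (snd z)) (fst z) *v fst (snd z)) $ i) * pdiff (dir_p i) \<phi> z)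
    + (\<Sum>i\<in>UNIV. \<Sum>j\<in>UNIV. \<rho> z * Amat f A0 (fst z) $ i $ j * iter_pdiff [dir_p i, dir_p j] \<phi> z)
    + (\<Sum>k\<in>UNIV. \<Sum>i\<in>UNIV. \<Sum>j\<in>UNIV. \<rho> z * (f k (fst z) / \<eta> k
        * (fst (snd z) $ i * fst (snd z) $ j - (if i = j then 1 else 0))) * pdiff (dir_xi k i j) \<phi> z)"
  by (simp add: generator_def case_prod_unfold sum_distrib_left distrib_left right_diff_distrib
      sum_subtractf left_diff_distrib mult_ac)

lemma nuK_density_generator_integral:
  shows "integrable lborel (\<lambda>z. \<rho> z * generator \<pi> f A0 \<eta> \<phi> z)"
    and "integral\<^sup>L lborel (\<lambda>z. \<rho> z * generator \<pi> f A0 \<eta> \<phi> z) = 0"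
proof -
  let ?L = "\<lambda>i z. pdiff (axis i 1) (\<lambda>\<theta>. ln (\<pi> \<theta>)) (fst z)"
  let ?X = "\<lambda>z. xi_of f (snd (snd z)) (fst z)" and ?A = "\<lambda>z. Amat f A0 (fst z)"
  let ?\<delta> = "\<lambda>i j. if i = j then 1 else 0 :: real"
  define adjoint where "adjoint = (\<lambda>z. (\<Sum>i\<in>UNIV. \<phi> z * (fst (snd z) $ i * ?L i z * \<rho> z))
       + (\<Sum>i\<in>UNIV. \<phi> z * ((- ?X z $ i $ i - (?L i z - (?X z *v fst (snd z)) $ i) * fst (snd z) $ i) * \<rho> z))
       + (\<Sum>i\<in>UNIV. \<Sum>j\<in>UNIV. \<phi> z * ((?A z $ i $ j * ?\<delta> i j - ?A z $ i $ j * fst (snd z) $ i * fst (snd z) $ j) * \<rho> z))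
       + (\<Sum>k\<in>UNIV. \<Sum>i\<in>UNIV. \<Sum>j\<in>UNIV. \<phi> z * (- f k (fst z) * (fst (snd z) $ i * fst (snd z) $ j - ?\<delta> i j)
           * (snd (snd z) $ k $ i $ j - A0 $ k $ i $ j) * \<rho> z)))"
  have "opposite_integrals lborel (\<lambda>z. \<rho> z * generator \<pi> f A0 \<eta> \<phi> z) adjoint"
    unfolding nuK_density_mult_generator adjoint_def
    by (intro opposite_integrals_add opposite_integrals_sum finite opposite_integrals_theta_term
        opposite_integrals_p_term opposite_integrals_second_order_term opposite_integrals_xi_term)
  moreover have "adjoint z = 0" for z
  proof -
    note identity = langevin_adjoint_identity[of "\<lambda>i. fst (snd z) $ i" "\<lambda>i. ?L i z" "\<lambda>k. f k (fst z)"
        "\<lambda>k i j. snd (snd z) $ k $ i $ j" "\<lambda>k i j. A0 $ k $ i $ j"]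
    show ?thesis
      unfolding adjoint_def xi_of_nth Amat_nth matrix_vector_mult_def
      using arg_cong[OF identity, of "\<lambda>t. \<phi> z * \<rho> z * t"]
      by (simp add: sum_distrib_left sum_subtractf sum_negf algebra_simps)
  qed
  ultimately show "integrable lborel (\<lambda>z. \<rho> z * generator \<pi> f A0 \<eta> \<phi> z)"
    and "integral\<^sup>L lborel (\<lambda>z. \<rho> z * generator \<pi> f A0 \<eta> \<phi> z) = 0"
    by (rule opposite_integrals_zero)+
qed

end

end

lemma integrable_density_if_integrable_mult:
  fixes d g :: "'a::euclidean_space \<Rightarrow> real"
  assumes d: "continuous_on UNIV d" "\<And>x. 0 < d x" and int: "integrable lborel (\<lambda>x. d x * g x)"
  shows "integrable (density lborel (\<lambda>x. ennreal (d x))) g"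
    and "integral\<^sup>L (density lborel (\<lambda>x. ennreal (d x))) g = integral\<^sup>L lborel (\<lambda>x. d x * g x)"
proof -
  have d_measurable: "d \<in> borel_measurable lborel"
    using d(1) by (simp add: borel_measurable_continuous_onI)
  have "g = (\<lambda>x. (d x * g x) / d x)"
    using d(2) by (auto simp: fun_eq_iff less_imp_neq[symmetric])
  then have g_measurable: "g \<in> borel_measurable lborel"
    using borel_measurable_integrable[OF int] d_measurable by (metis borel_measurable_divide)
  have "AE x in lborel. 0 \<le> d x"
    using d(2) by (simp add: less_imp_le)
  then show "integrable (density lborel (\<lambda>x. ennreal (d x))) g"
    and "integral\<^sup>L (density lborel (\<lambda>x. ennreal (d x))) g = integral\<^sup>L lborel (\<lambda>x. d x * g x)"
    using int integrable_density[OF g_measurable d_measurable] integral_density[OF g_measurable d_measurable]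
    by simp_all
qed

theorem theorem4p1:
  fixes \<pi> :: "real^'n::finite \<Rightarrow> real"
    and f :: "'k::finite \<Rightarrow> real^'n \<Rightarrow> real"
    and A0 :: "real^'n^'n^'k"
    and \<eta> :: "'k \<Rightarrow> real"
  assumes pi_smooth: "smooth \<pi>"
    and pi_pos: "\<forall>\<theta>. 0 < \<pi> \<theta>"
    and pi_prob: "(\<pi> has_integral 1) UNIV"
    and logpi_smooth: "smooth (\<lambda>\<theta>. ln (\<pi> \<theta>))"
    and f_smooth: "\<forall>k. smooth (f k)"
    and A0_sym: "\<forall>k. symmetric_mat (A0 $ k)"
    and A_pd: "\<forall>\<theta>. pos_def_mat (Amat f A0 \<theta>)"
    and A_sqrt_smooth: "\<exists>S :: real^'n \<Rightarrow> real^'n^'n. smooth S \<and>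
          (\<forall>\<theta>. pos_semidef_mat (S \<theta>) \<and> S \<theta> ** S \<theta> = Amat f A0 \<theta>)"
    and eta_pos: "\<forall>k. 0 < \<eta> k"
  shows "prob_space (nuK \<pi> A0 \<eta>)
    \<and> (\<forall>\<phi> :: ('n, 'k) state \<Rightarrow> real. smooth \<phi> \<and> compact (closure {z. \<phi> z \<noteq> 0}) \<longrightarrow>
          integrable (nuK \<pi> A0 \<eta>) (generator \<pi> f A0 \<eta> \<phi>)
          \<and> integral\<^sup>L (nuK \<pi> A0 \<eta>) (generator \<pi> f A0 \<eta> \<phi>) = 0)
    \<and> distr (nuK \<pi> A0 \<eta>) lborel fst = density lborel (\<lambda>\<theta>. ennreal (\<pi> \<theta>))"
proof -
  interpret adaptive_langevin \<pi> f A0 \<eta>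
    using pi_pos logpi_smooth f_smooth eta_pos by unfold_locales auto
  have pi_continuous: "continuous_on UNIV \<pi>"
    using pi_smooth by (rule smooth_continuous_on)
  have pi_nonneg: "0 \<le> \<pi> \<theta>" for \<theta>
    using pi_pos by (simp add: less_imp_le)
  have eta: "0 < \<eta> k" for k
    using eta_pos by simp
  \<comment> \<open>A0_sym, A_pd and A_sqrt_smooth only make the SDE well posed; the generator identity does not use them.\<close>
  have "integrable (nuK \<pi> A0 \<eta>) (generator \<pi> f A0 \<eta> \<phi>) \<and> integral\<^sup>L (nuK \<pi> A0 \<eta>) (generator \<pi> f A0 \<eta> \<phi>) = 0"
    if "smooth \<phi>" "compact (closure {z. \<phi> z \<noteq> 0})" for \<phi> :: "('n, 'k) state \<Rightarrow> real"
  proof -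
    have "\<phi> z = 0" if "z \<notin> closure {z. \<phi> z \<noteq> 0}" for z
      using that closure_subset[of "{z. \<phi> z \<noteq> 0}"] by auto
    note generator_integral = nuK_density_generator_integral[OF that this]
    show ?thesis
      unfolding nuK_def
      using integrable_density_if_integrable_mult[OF continuous_on_nuK_density[OF pi_continuous]
          nuK_density_pos generator_integral(1)] generator_integral(2)
      by simp
  qed
  then show ?thesis
    using prob_space_nuK[OF pi_continuous pi_nonneg pi_prob eta] distr_fst_nuK[OF pi_continuous pi_nonneg eta]
    by auto
qed

end
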